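(* Let $p$ be a prime and $1\le k\le\nu$ integers, and assume that $p$ is odd, or that $p=2$ and $k\ge 2$. Let $\Omega_p^{k,\nu}:=\ker\big((\mathbb{Z}/p^\nu\mathbb{Z})^\times\to(\mathbb{Z}/p^k\mathbb{Z})^\times\big)=\{1+\beta p^k:\beta\in\mathbb{Z}/p^\nu\mathbb{Z}\}$, acting on $\mathbb{Z}/p^\nu\mathbb{Z}$ by multiplication. Then $$H^1(\Omega_p^{k,\nu},\mathbb{Z}/p^\nu\mathbb{Z})=0=H^2(\Omega_p^{k,\nu},\mathbb{Z}/p^\nu\mathbb{Z}).$$
   Context: Group cohomology of the finite group $\Omega_p^{k,\nu}$. *)

theory Defs
  imports "HOL-Number_Theory.Number_Theory"
begin

text \<open>Group cohomology in degrees 1 and 2 via inhomogeneous cochains, for a finite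
group G (carrier set with multiplication mul) acting on the module Z/NZ, represented
by the integers 0..N-1 with addition mod N; act g m is the action.\<close>

definition ZN :: "int \<Rightarrow> int set" where
  "ZN N = {0..<N}"

definition cochains1 :: "'g set \<Rightarrow> int \<Rightarrow> ('g \<Rightarrow> int) set" where
  "cochains1 G N = {f. (\<forall>g. g \<notin> G \<longrightarrow> f g = 0) \<and> (\<forall>g\<in>G. f g \<in> ZN N)}"

definition cochains2 :: "'g set \<Rightarrow> int \<Rightarrow> ('g \<Rightarrow> 'g \<Rightarrow> int) set" where
  "cochains2 G N = {c. (\<forall>g h. \<not> (g \<in> G \<and> h \<in> G) \<longrightarrow> c g h = 0)
                       \<and> (\<forall>g\<in>G. \<forall>h\<in>G. c g h \<in> ZN N)}"

definition cocycles1 :: "'g set \<Rightarrow> ('g \<Rightarrow> 'g \<Rightarrow> 'g) \<Rightarrow> ('g \<Rightarrow> int \<Rightarrow> int) \<Rightarrow> int \<Rightarrow> ('g \<Rightarrow> int) set" where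
  "cocycles1 G mul act N = {f \<in> cochains1 G N.
      \<forall>g\<in>G. \<forall>h\<in>G. (act g (f h) - f (mul g h) + f g) mod N = 0}"

definition coboundaries1 :: "'g set \<Rightarrow> ('g \<Rightarrow> 'g \<Rightarrow> 'g) \<Rightarrow> ('g \<Rightarrow> int \<Rightarrow> int) \<Rightarrow> int \<Rightarrow> ('g \<Rightarrow> int) set" where
  "coboundaries1 G mul act N = {f \<in> cochains1 G N.
      \<exists>m\<in>ZN N. \<forall>g\<in>G. f g = (act g m - m) mod N}"

definition cocycles2 :: "'g set \<Rightarrow> ('g \<Rightarrow> 'g \<Rightarrow> 'g) \<Rightarrow> ('g \<Rightarrow> int \<Rightarrow> int) \<Rightarrow> int \<Rightarrow> ('g \<Rightarrow> 'g \<Rightarrow> int) set" where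
  "cocycles2 G mul act N = {c \<in> cochains2 G N.
      \<forall>g\<in>G. \<forall>h\<in>G. \<forall>l\<in>G.
        (act g (c h l) - c (mul g h) l + c g (mul h l) - c g h) mod N = 0}"

definition coboundaries2 :: "'g set \<Rightarrow> ('g \<Rightarrow> 'g \<Rightarrow> 'g) \<Rightarrow> ('g \<Rightarrow> int \<Rightarrow> int) \<Rightarrow> int \<Rightarrow> ('g \<Rightarrow> 'g \<Rightarrow> int) set" where
  "coboundaries2 G mul act N = {c \<in> cochains2 G N.
      \<exists>b\<in>cochains1 G N. \<forall>g\<in>G. \<forall>h\<in>G. c g h = (act g (b h) - b (mul g h) + b g) mod N}"

definition H1_vanishes :: "'g set \<Rightarrow> ('g \<Rightarrow> 'g \<Rightarrow> 'g) \<Rightarrow> ('g \<Rightarrow> int \<Rightarrow> int) \<Rightarrow> int \<Rightarrow> bool" where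
  "H1_vanishes G mul act N \<longleftrightarrow> cocycles1 G mul act N \<subseteq> coboundaries1 G mul act N"

definition H2_vanishes :: "'g set \<Rightarrow> ('g \<Rightarrow> 'g \<Rightarrow> 'g) \<Rightarrow> ('g \<Rightarrow> int \<Rightarrow> int) \<Rightarrow> int \<Rightarrow> bool" where
  "H2_vanishes G mul act N \<longleftrightarrow> cocycles2 G mul act N \<subseteq> coboundaries2 G mul act N"

definition Omega :: "nat \<Rightarrow> nat \<Rightarrow> nat \<Rightarrow> int set" where
  "Omega p k \<nu> = {x \<in> {0..<int p ^ \<nu>}. [x = 1] (mod int p ^ k)}"

definition Omega_mul :: "nat \<Rightarrow> nat \<Rightarrow> int \<Rightarrow> int \<Rightarrow> int" where
  "Omega_mul p \<nu> x y = (x * y) mod (int p ^ \<nu>)"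

definition Omega_act :: "nat \<Rightarrow> nat \<Rightarrow> int \<Rightarrow> int \<Rightarrow> int" where
  "Omega_act p \<nu> g m = (g * m) mod (int p ^ \<nu>)"

end

(*
  The group Omega_p^{k,nu} is cyclic of order p^(nu-k), generated by sigma = 1 + p^k: lifting the
  exponent gives (1 + p^k)^(p^j) = 1 + p^(k+j) w with w a unit mod p (this is the step that fails
  for p = 2, k = 1). For a cyclic group with generator sigma acting on M one has
  H^1 = ker(Nm) / (sigma - 1) M and H^2 = M^G / Nm(M), where Nm = sum of the sigma^i. Here
  sigma - 1 = p^k and Nm = p^(nu-k) u with u a unit, so on M = Z/p^nu the kernel of Nm and the
  image of sigma - 1 are both p^k M, while the invariants and the image of Nm are both p^(nu-k) M.
*)
theory Submission
  imports Defs
begin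

section \<open>Cohomology of a cyclic group of residues acting by multiplication\<close>

lemma mod_diff_add_left_eq: "(a mod N - b + c) mod N = (a - b + c) mod N" for a b c N :: int
  by (metis mod_add_left_eq mod_diff_left_eq)

lemma cong_solve_diff_add: "[a - b + c = 0] (mod N) \<Longrightarrow> [b = a + c] (mod N)" for a b c N :: int
  by (metis cong_add_lcancel_0 cong_sym add.commute diff_add_cancel add_diff_eq)

lemma cocycles1_cong:
  assumes "f \<in> cocycles1 G (\<lambda>x y. x * y mod N) (\<lambda>g m. g * m mod N) N" "g \<in> G" "h \<in> G"
  shows "[f (g * h mod N) = g * f h + f g] (mod N)"
proof -
  have "(g * f h mod N - f (g * h mod N) + f g) mod N = 0"
    using assms unfolding cocycles1_def by auto
  then have "[g * f h - f (g * h mod N) + f g = 0] (mod N)"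
    unfolding cong_def mod_diff_add_left_eq by simp
  then show ?thesis
    by (rule cong_solve_diff_add)
qed

locale cyclic_mult_action =
  fixes N \<sigma> :: int and n :: nat
  assumes N_gt_1: "N > 1" and n_pos: "n > 0"
    and period: "[\<sigma> ^ n = 1] (mod N)"
    and inj_powers: "inj_on (\<lambda>j. \<sigma> ^ j mod N) {..<n}"
begin

abbreviation G :: "int set" where
  "G \<equiv> (\<lambda>j. \<sigma> ^ j mod N) ` {..<n}"

lemma one_mod_N [simp]: "1 mod N = 1"
  using N_gt_1 by simp

lemma power_mod_period: "\<sigma> ^ j mod N = \<sigma> ^ (j mod n) mod N"
proof -
  have "[(\<sigma> ^ n) ^ (j div n) * \<sigma> ^ (j mod n) = 1 ^ (j div n) * \<sigma> ^ (j mod n)] (mod N)"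
    by (intro cong_mult cong_pow period cong_refl)
  then show ?thesis
    by (simp add: cong_def power_mult[symmetric] power_add[symmetric])
qed

lemma power_mod_in_G: "\<sigma> ^ j mod N \<in> G"
  by (subst power_mod_period) (simp add: n_pos)

lemma one_in_G: "1 \<in> G"
  using power_mod_in_G[of 0] by simp

lemma G_mod: "g \<in> G \<Longrightarrow> g mod N = g"
  by auto

lemma mult_power_mod: "(\<sigma> ^ i mod N) * (\<sigma> ^ j mod N) mod N = \<sigma> ^ (i + j) mod N"
  by (simp add: mod_mult_eq power_add)

lemma mult_mod_in_G: "g \<in> G \<Longrightarrow> h \<in> G \<Longrightarrow> g * h mod N \<in> G"
  by (auto simp only: mult_power_mod power_mod_in_G)

lemma cocycle1_on_powers:
  assumes "f \<in> cocycles1 G (\<lambda>x y. x * y mod N) (\<lambda>g m. g * m mod N) N"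
  shows "[f (\<sigma> ^ j mod N) = (\<Sum>i<j. \<sigma> ^ i) * f (\<sigma> mod N)] (mod N)"
proof (induction j)
  case 0
  have "[f 1 = 1 * f 1 + f 1] (mod N)"
    using cocycles1_cong[OF assms one_in_G one_in_G] by simp
  then show ?case
    by (simp add: cong_iff_dvd_diff cong_0_iff)
next
  case (Suc j)
  have "[f (\<sigma> ^ Suc j mod N) = (\<sigma> ^ j mod N) * f (\<sigma> mod N) + f (\<sigma> ^ j mod N)] (mod N)"
    using cocycles1_cong[OF assms power_mod_in_G power_mod_in_G, of j 1] mult_power_mod[of j 1]
    by simp
  also have "[(\<sigma> ^ j mod N) * f (\<sigma> mod N) + f (\<sigma> ^ j mod N)
      = \<sigma> ^ j * f (\<sigma> mod N) + (\<Sum>i<j. \<sigma> ^ i) * f (\<sigma> mod N)] (mod N)"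
    by (intro cong_add cong_mult Suc.IH cong_refl) (simp add: cong_def)
  finally show ?case
    by (simp add: algebra_simps)
qed

theorem H1_vanishes_if_norm_kernel_in_image:
  assumes norm_kernel: "\<And>a. [(\<Sum>i<n. \<sigma> ^ i) * a = 0] (mod N) \<Longrightarrow> \<exists>m. [a = (\<sigma> - 1) * m] (mod N)"
  shows "H1_vanishes G (\<lambda>x y. x * y mod N) (\<lambda>g m. g * m mod N) N"
  unfolding H1_vanishes_def
proof
  fix f assume f: "f \<in> cocycles1 G (\<lambda>x y. x * y mod N) (\<lambda>g m. g * m mod N) N"
  have "[(\<Sum>i<n. \<sigma> ^ i) * f (\<sigma> mod N) = (\<Sum>i<0. \<sigma> ^ i) * f (\<sigma> mod N)] (mod N)"
    using cocycle1_on_powers[OF f, of n] cocycle1_on_powers[OF f, of 0] period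
    by (simp add: cong_def)
  then obtain m where m: "[f (\<sigma> mod N) = (\<sigma> - 1) * m] (mod N)"
    using norm_kernel by auto
  have "f g = (g * (m mod N) mod N - m mod N) mod N" if "g \<in> G" for g
  proof -
    obtain j where g: "g = \<sigma> ^ j mod N"
      using \<open>g \<in> G\<close> by blast
    have "[f g = (\<Sum>i<j. \<sigma> ^ i) * ((\<sigma> - 1) * m)] (mod N)"
      unfolding g by (rule cong_trans[OF cocycle1_on_powers[OF f]]) (intro cong_mult cong_refl m)
    also have "(\<Sum>i<j. \<sigma> ^ i) * ((\<sigma> - 1) * m) = (\<sigma> ^ j - 1) * m"
      by (simp only: power_diff_1_eq) (simp add: mult_ac)
    also have "\<dots> = \<sigma> ^ j * m - m"
      by (simp add: algebra_simps)
    also have "[\<dots> = g * (m mod N) - m mod N] (mod N)"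
      unfolding g by (intro cong_diff cong_mult) (simp_all add: cong_def)
    finally have "f g mod N = (g * (m mod N) - m mod N) mod N"
      by (simp add: cong_def)
    moreover have "f g \<in> ZN N"
      using f \<open>g \<in> G\<close> unfolding cocycles1_def cochains1_def by auto
    ultimately show ?thesis
      unfolding ZN_def mod_diff_left_eq by simp
  qed
  moreover have "m mod N \<in> ZN N"
    using N_gt_1 unfolding ZN_def by simp
  ultimately show "f \<in> coboundaries1 G (\<lambda>x y. x * y mod N) (\<lambda>g m. g * m mod N) N"
    using f unfolding coboundaries1_def cocycles1_def by auto
qed

definition differential1 :: "(int \<Rightarrow> int) \<Rightarrow> int \<Rightarrow> int \<Rightarrow> int" where
  "differential1 b g h = g * b h - b (g * h mod N) + b g"

definition differential2 :: "(int \<Rightarrow> int \<Rightarrow> int) \<Rightarrow> int \<Rightarrow> int \<Rightarrow> int \<Rightarrow> int" where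
  "differential2 c g h l = g * c h l - c (g * h mod N) l + c g (h * l mod N) - c g h"

lemma differential2_differential1: "[differential2 (differential1 b) g h l = 0] (mod N)"
proof -
  have "(g * h mod N) * l mod N = g * (h * l mod N) mod N"
    by (simp add: mod_mult_left_eq mod_mult_right_eq mult.assoc)
  then have "differential2 (differential1 b) g h l = (g * h - g * h mod N) * b l"
    unfolding differential2_def differential1_def by (simp add: algebra_simps)
  moreover have "[(g * h - g * h mod N) * b l = 0 * b l] (mod N)"
    by (intro cong_mult cong_refl) (simp add: cong_diff_iff_cong_0)
  ultimately show ?thesis
    by simp
qed

lemma cocycles2_cong:
  assumes "c \<in> cocycles2 G (\<lambda>x y. x * y mod N) (\<lambda>g m. g * m mod N) N"
    and "g \<in> G" "h \<in> G" "l \<in> G"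
  shows "[differential2 c g h l = 0] (mod N)"
proof -
  have "[g * c h l mod N - c (g * h mod N) l + c g (h * l mod N) - c g h = 0] (mod N)"
    using assms unfolding cocycles2_def by (auto simp: cong_def)
  moreover have "[g * c h l mod N - c (g * h mod N) l + c g (h * l mod N) - c g h
      = differential2 c g h l] (mod N)"
    unfolding differential2_def by (intro cong_add cong_diff cong_refl) simp
  ultimately show ?thesis
    using cong_sym cong_trans by meson
qed

lemma cocycle_zero_if_zero_on_generator:
  assumes cocycle: "\<And>g h l. g \<in> G \<Longrightarrow> h \<in> G \<Longrightarrow> l \<in> G \<Longrightarrow> [differential2 c g h l = 0] (mod N)"
    and on_generator: "\<And>g. g \<in> G \<Longrightarrow> [c g (\<sigma> mod N) = 0] (mod N)"
    and "g \<in> G" "h \<in> G"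
  shows "[c g h = 0] (mod N)"
proof -
  define s where "s = \<sigma> mod N"
  have s: "s \<in> G"
    using power_mod_in_G[of 1] unfolding s_def by simp
  have "[c 1 1 = c 1 s] (mod N)"
    using cocycle[OF one_in_G one_in_G s] G_mod[OF s]
    by (simp add: differential2_def cong_diff_iff_cong_0 cong_sym_eq[of "c 1 1"])
  also have "[c 1 s = 0] (mod N)"
    using on_generator[OF one_in_G] unfolding s_def .
  finally have c11: "[c 1 1 = 0] (mod N)" .
  have "[c g 1 = g * c 1 1] (mod N)"
    using cocycle[OF \<open>g \<in> G\<close> one_in_G one_in_G] G_mod[OF \<open>g \<in> G\<close>]
    by (simp add: differential2_def cong_diff_iff_cong_0 cong_sym_eq[of "c g 1"])
  also have "[g * c 1 1 = g * 0] (mod N)"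
    using c11 by (rule cong_scalar_left)
  finally have cg1: "[c g 1 = 0] (mod N)"
    by simp
  have "[c g (\<sigma> ^ j mod N) = 0] (mod N)" for j
  proof (induction j)
    case 0
    then show ?case using cg1 by simp
  next
    case (Suc j)
    define h where "h = \<sigma> ^ j mod N"
    have h: "h \<in> G" and gh: "g * h mod N \<in> G"
      unfolding h_def using power_mod_in_G mult_mod_in_G \<open>g \<in> G\<close> by auto
    have "c g (h * s mod N) - (c g h - g * c h s + c (g * h mod N) s) = differential2 c g h s"
      by (simp add: differential2_def)
    then have "[c g (h * s mod N) = c g h - g * c h s + c (g * h mod N) s] (mod N)"
      using cocycle[OF \<open>g \<in> G\<close> h s] cong_diff_iff_cong_0 by metis
    also have "[c g h - g * c h s + c (g * h mod N) s = 0 - g * 0 + 0] (mod N)"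
      using on_generator[OF h] on_generator[OF gh] Suc.IH unfolding h_def s_def
      by (intro cong_add cong_diff cong_mult cong_refl)
    finally show ?case
      using mult_power_mod[of j 1] unfolding h_def s_def by simp
  qed
  then show ?thesis
    using \<open>h \<in> G\<close> by blast
qed

lemma generator_column_sum_invariant:
  assumes cocycle: "\<And>g h l. g \<in> G \<Longrightarrow> h \<in> G \<Longrightarrow> l \<in> G \<Longrightarrow> [differential2 c g h l = 0] (mod N)"
  defines "C \<equiv> \<Sum>j<n. c (\<sigma> ^ j mod N) (\<sigma> mod N)"
  shows "[\<sigma> * C = C] (mod N)"
proof -
  define s where "s = \<sigma> mod N"
  define F where "F j = c (\<sigma> ^ j mod N) s" for j
  define H where "H j = c s (\<sigma> ^ j mod N)" for j
  have s: "s \<in> G"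
    using power_mod_in_G[of 1] unfolding s_def by simp
  have "[s * F j - F (Suc j) + H (Suc j) - H j = 0] (mod N)" for j
    using cocycle[OF s power_mod_in_G s, of j] mult_power_mod[of 1 j] mult_power_mod[of j 1]
    unfolding differential2_def F_def H_def s_def by simp
  then have "[(\<Sum>j<n. s * F j - F (Suc j) + H (Suc j) - H j) = (\<Sum>j<n. 0)] (mod N)"
    by (intro cong_sum) auto
  moreover have "F n = F 0" "H n = H 0"
    using period unfolding F_def H_def by (simp_all add: cong_def)
  then have "(\<Sum>j<n. F (Suc j) - F j) = 0" "(\<Sum>j<n. H (Suc j) - H j) = 0"
    by (simp_all only: sum_lessThan_telescope)
  moreover have "(\<Sum>j<n. s * F j - F (Suc j) + H (Suc j) - H j)
      = s * (\<Sum>j<n. F j) - (\<Sum>j<n. F j) - (\<Sum>j<n. F (Suc j) - F j) + (\<Sum>j<n. H (Suc j) - H j)"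
    by (simp add: sum_subtractf sum.distrib sum_distrib_left algebra_simps)
  ultimately have "[s * C - C = 0] (mod N)"
    unfolding C_def F_def s_def by simp
  then show ?thesis
    unfolding s_def cong_diff_iff_cong_0 by (simp add: cong_def mod_mult_left_eq)
qed

lemma cochain_with_prescribed_differential_on_generator:
  assumes norm: "[(\<Sum>i<n. \<sigma> ^ i) * t = (\<Sum>j<n. c (\<sigma> ^ j mod N) (\<sigma> mod N))] (mod N)"
  obtains b where "b \<in> cochains1 G N"
    and "\<And>g. g \<in> G \<Longrightarrow> [differential1 b g (\<sigma> mod N) = c g (\<sigma> mod N)] (mod N)"
proof -
  define s where "s = \<sigma> mod N"
  \<comment> \<open>B j is the value forced on b at \<sigma>^j by the prescribed differential; the norm equation
     makes it periodic, B n \<equiv> B 0, so that b is well defined on G\<close>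
  define B where "B j = c 1 s + (\<Sum>i<j. \<sigma> ^ i) * t - (\<Sum>i<j. c (\<sigma> ^ i mod N) s)" for j
  have B_Suc: "B (Suc j) = B j + \<sigma> ^ j * t - c (\<sigma> ^ j mod N) s" for j
    unfolding B_def by (simp add: algebra_simps)
  have "[B n = c 1 s + (\<Sum>j<n. c (\<sigma> ^ j mod N) s) - (\<Sum>j<n. c (\<sigma> ^ j mod N) s)] (mod N)"
    unfolding B_def using norm unfolding s_def by (intro cong_add cong_diff cong_refl)
  then have B_n: "[B n = B 0] (mod N)"
    by (simp add: B_def)
  define b where "b g = (if g \<in> G then B (the_inv_into {..<n} (\<lambda>j. \<sigma> ^ j mod N) g) mod N else 0)" for g
  have "b \<in> cochains1 G N"
    unfolding cochains1_def ZN_def b_def using N_gt_1 by simp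
  have b_pow: "[b (\<sigma> ^ j mod N) = B j] (mod N)" if "j \<le> n" for j
  proof (cases "j = n")
    case True
    then have "b (\<sigma> ^ j mod N) = b (\<sigma> ^ 0 mod N)"
      using period by (simp add: cong_def)
    also have "\<dots> = B 0 mod N"
      unfolding b_def using the_inv_into_f_f[OF inj_powers, of 0] n_pos one_in_G by simp
    finally show ?thesis
      using B_n True by (simp add: cong_sym_eq)
  next
    case False
    then show ?thesis
      unfolding b_def using the_inv_into_f_f[OF inj_powers, of j] that power_mod_in_G[of j] by simp
  qed
  have b_s: "[b s = t] (mod N)"
    using b_pow[of 1] n_pos unfolding s_def B_def by simp
  have "[differential1 b g s = c g s] (mod N)" if "g \<in> G" for g
  proof -
    obtain j where j: "j < n" and g: "g = \<sigma> ^ j mod N"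
      using \<open>g \<in> G\<close> by blast
    have gs: "g * s mod N = \<sigma> ^ Suc j mod N"
      unfolding g s_def using mult_power_mod[of j 1] by simp
    have "[differential1 b g s = \<sigma> ^ j * t - B (Suc j) + B j] (mod N)"
      unfolding differential1_def gs unfolding g using j
      by (intro cong_add cong_diff cong_mult b_s b_pow) auto
    then show ?thesis
      unfolding B_Suc g by simp
  qed
  then show ?thesis
    using that \<open>b \<in> cochains1 G N\<close> unfolding s_def by blast
qed

theorem H2_vanishes_if_invariants_in_norm_image:
  assumes invariants: "\<And>C. [\<sigma> * C = C] (mod N) \<Longrightarrow> \<exists>t. [(\<Sum>i<n. \<sigma> ^ i) * t = C] (mod N)"
  shows "H2_vanishes G (\<lambda>x y. x * y mod N) (\<lambda>g m. g * m mod N) N"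
  unfolding H2_vanishes_def
proof
  fix c assume c: "c \<in> cocycles2 G (\<lambda>x y. x * y mod N) (\<lambda>g m. g * m mod N) N"
  note cocycle = cocycles2_cong[OF c]
  obtain t where "[(\<Sum>i<n. \<sigma> ^ i) * t = (\<Sum>j<n. c (\<sigma> ^ j mod N) (\<sigma> mod N))] (mod N)"
    using invariants generator_column_sum_invariant[OF cocycle] by blast
  then obtain b where b: "b \<in> cochains1 G N"
    and b_gen: "\<And>g. g \<in> G \<Longrightarrow> [differential1 b g (\<sigma> mod N) = c g (\<sigma> mod N)] (mod N)"
    by (metis cochain_with_prescribed_differential_on_generator)
  define d where "d g h = c g h - differential1 b g h" for g h
  have "[differential2 d g h l = 0] (mod N)" if "g \<in> G" "h \<in> G" "l \<in> G" for g h l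
  proof -
    have "differential2 d g h l = differential2 c g h l - differential2 (differential1 b) g h l"
      unfolding differential2_def d_def by (simp add: algebra_simps)
    moreover have "[differential2 c g h l - differential2 (differential1 b) g h l = 0 - 0] (mod N)"
      using cocycle[OF that] differential2_differential1 by (rule cong_diff)
    ultimately show ?thesis
      by simp
  qed
  moreover have "[d g (\<sigma> mod N) = 0] (mod N)" if "g \<in> G" for g
    unfolding d_def cong_diff_iff_cong_0 using b_gen[OF that] by (rule cong_sym)
  ultimately have "[c g h = differential1 b g h] (mod N)" if "g \<in> G" "h \<in> G" for g h
    using cocycle_zero_if_zero_on_generator[of d g h] that unfolding d_def cong_diff_iff_cong_0 by simp
  moreover have "c g h \<in> ZN N" if "g \<in> G" "h \<in> G" for g h
    using c that unfolding cocycles2_def cochains2_def by auto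
  ultimately have "c g h = (g * b h mod N - b (g * h mod N) + b g) mod N" if "g \<in> G" "h \<in> G" for g h
    using that unfolding ZN_def differential1_def cong_def mod_diff_add_left_eq by simp
  then show "c \<in> coboundaries2 G (\<lambda>x y. x * y mod N) (\<lambda>g m. g * m mod N) N"
    using b c unfolding coboundaries2_def cocycles2_def by auto
qed

end

section \<open>The powers of 1 + p^k modulo p^nu\<close>

lemma one_plus_prime_power_pow_prime:
  fixes p m :: nat and a :: int
  assumes p: "prime p" and m: "1 \<le> m" and odd_or_m: "odd p \<or> 2 \<le> m"
  shows "\<exists>b. (1 + int p ^ m * a) ^ p = 1 + int p ^ (m + 1) * a + int p ^ (m + 2) * b"
proof -
  define y where "y = int p ^ m * a"
  have p2: "p \<ge> 2"
    using p prime_ge_2_nat by blast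
  have y_pow: "y ^ i = int p ^ (m * i) * a ^ i" for i
    unfolding y_def by (simp add: power_mult_distrib power_mult)
  have higher_terms: "int p ^ (m + 2) dvd of_nat (p choose i) * y ^ i" if i: "i \<in> {2..p}" for i
  proof (cases "i < p")
    case True
    have "int p dvd of_nat (p choose i)"
      using dvd_choose_prime[of i p] True i p by auto
    moreover have "int p ^ (m + 1) dvd y ^ i"
      unfolding y_pow using i m
      by (intro dvd_mult2 le_imp_power_dvd) (cases i; auto simp: nat_distrib)
    ultimately have "int p * int p ^ (m + 1) dvd of_nat (p choose i) * y ^ i"
      by (rule mult_dvd_mono)
    then show ?thesis
      by (simp add: power_add mult_ac)
  next
    case False
    \<comment> \<open>only this term needs the hypothesis: for p = 2 it forces m \<ge> 2\<close>
    then have "i = p"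
      using i by auto
    moreover have "m + 2 \<le> m * p"
    proof (cases "odd p")
      case True
      then have "3 \<le> p"
        using p2 by presburger
      then have "m * 3 \<le> m * p"
        by simp
      then show ?thesis
        using m by linarith
    next
      case False
      then have "m * 2 \<le> m * p" "2 \<le> m"
        using p2 odd_or_m by auto
      then show ?thesis
        by linarith
    qed
    ultimately show ?thesis
      unfolding y_pow by (intro dvd_mult dvd_mult2 le_imp_power_dvd) simp
  qed
  have "int p ^ (m + 2) dvd (\<Sum>i\<in>{2..p}. of_nat (p choose i) * y ^ i)"
    by (rule dvd_sum) (rule higher_terms)
  then obtain b where b: "(\<Sum>i\<in>{2..p}. of_nat (p choose i) * y ^ i) = int p ^ (m + 2) * b"
    by (elim dvdE)
  have split: "{..p} = {0, 1} \<union> {2..p}"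
    using p2 by auto
  have "(y + 1) ^ p = 1 + int p * y + int p ^ (m + 2) * b"
    unfolding binomial_ring[of y 1 p] split b[symmetric] by (subst sum.union_disjoint) auto
  then show ?thesis
    unfolding y_def by (intro exI[of _ b]) (simp add: add.commute mult_ac)
qed

lemma one_plus_prime_power_pow_prime_power:
  fixes p k j :: nat
  assumes p: "prime p" and k: "1 \<le> k" and odd_or_k: "odd p \<or> 2 \<le> k"
  shows "\<exists>w. (1 + int p ^ k) ^ (p ^ j) = 1 + int p ^ (k + j) * w \<and> [w = 1] (mod int p)"
proof (induction j)
  case 0
  show ?case
    by (intro exI[of _ 1]) simp
next
  case (Suc j)
  then obtain w where w: "(1 + int p ^ k) ^ (p ^ j) = 1 + int p ^ (k + j) * w" "[w = 1] (mod int p)"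
    by blast
  have "1 \<le> k + j" "odd p \<or> 2 \<le> k + j"
    using k odd_or_k by auto
  then obtain b where b: "(1 + int p ^ (k + j) * w) ^ p = 1 + int p ^ (k + j + 1) * w + int p ^ (k + j + 2) * b"
    using one_plus_prime_power_pow_prime[OF p] by blast
  have "(1 + int p ^ k) ^ (p ^ Suc j) = ((1 + int p ^ k) ^ (p ^ j)) ^ p"
    by (simp add: power_mult[symmetric] mult.commute)
  also have "\<dots> = 1 + int p ^ (k + Suc j) * (w + int p * b)"
    unfolding w(1) b by (simp add: algebra_simps power_add)
  finally have "(1 + int p ^ k) ^ (p ^ Suc j) = 1 + int p ^ (k + Suc j) * (w + int p * b)" .
  moreover have "[w + int p * b = 1] (mod int p)"
    using w(2) by (simp add: cong_def)
  ultimately show ?case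
    by blast
qed

lemma card_residue_class_below_multiple:
  fixes K a r :: int
  assumes "0 \<le> r" "r < K" "0 \<le> a"
  shows "card {x \<in> {0..<a * K}. [x = r] (mod K)} = nat a"
proof -
  have "{x \<in> {0..<a * K}. [x = r] (mod K)} = (\<lambda>b. r + K * b) ` {0..<a}"
  proof (intro equalityI subsetI)
    fix x assume "x \<in> {x \<in> {0..<a * K}. [x = r] (mod K)}"
    then have x: "0 \<le> x" "x < a * K" "x mod K = r"
      using assms by (auto simp: cong_def)
    then have x_eq: "x = r + K * (x div K)"
      by (metis mod_mult_div_eq add.commute)
    then have "K * (x div K) < K * a"
      using x(2) assms(1) by (simp add: mult.commute)
    then have "x div K < a"
      using assms by simp
    moreover have "0 \<le> x div K"
      using x assms by (simp add: pos_imp_zdiv_nonneg_iff)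
    ultimately show "x \<in> (\<lambda>b. r + K * b) ` {0..<a}"
      using x_eq by (intro image_eqI[of _ _ "x div K"]) auto
  next
    fix x assume "x \<in> (\<lambda>b. r + K * b) ` {0..<a}"
    then obtain b where b: "0 \<le> b" "b < a" "x = r + K * b"
      by auto
    have "K * b \<le> K * (a - 1)"
      using b assms by (intro mult_left_mono) auto
    then show "x \<in> {x \<in> {0..<a * K}. [x = r] (mod K)}"
      using b assms by (auto simp: cong_def algebra_simps)
  qed
  moreover have "inj_on (\<lambda>b. r + K * b) {0..<a}"
    using assms by (intro inj_onI) simp
  ultimately show ?thesis
    by (simp add: card_image)
qed

context
  fixes p k :: nat
  assumes prime: "prime p" and k_pos: "1 \<le> k" and odd_or_k: "odd p \<or> 2 \<le> k"
begin

lemma one_plus_prime_power_pow_cong_1_iff: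
  "[(1 + int p ^ k) ^ (p ^ j) = 1] (mod int p ^ \<nu>) \<longleftrightarrow> \<nu> \<le> k + j"
proof -
  obtain w where w: "(1 + int p ^ k) ^ (p ^ j) = 1 + int p ^ (k + j) * w" "[w = 1] (mod int p)"
    using one_plus_prime_power_pow_prime_power[OF prime k_pos odd_or_k] by blast
  have p_not_dvd_w: "\<not> int p dvd w"
    using cong_dvd_iff[OF w(2)] prime by (auto simp: prime_int_iff)
  have "[(1 + int p ^ k) ^ (p ^ j) = 1] (mod int p ^ \<nu>) \<longleftrightarrow> int p ^ \<nu> dvd int p ^ (k + j) * w"
    unfolding w(1) by (simp add: cong_iff_dvd_diff)
  also have "\<dots> \<longleftrightarrow> \<nu> \<le> k + j"
  proof
    assume dvd: "int p ^ \<nu> dvd int p ^ (k + j) * w"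
    show "\<nu> \<le> k + j"
    proof (rule ccontr)
      assume "\<not> \<nu> \<le> k + j"
      then have "int p ^ (k + j) * int p dvd int p ^ \<nu>"
        by (metis power_Suc2 le_imp_power_dvd not_less_eq_eq)
      then have "int p ^ (k + j) * int p dvd int p ^ (k + j) * w"
        using dvd by (rule dvd_trans)
      then show False
        using p_not_dvd_w prime by simp
    qed
  qed (simp add: le_imp_power_dvd dvd_mult2)
  finally show ?thesis .
qed

context
  fixes \<nu> :: nat
  assumes k_le: "k \<le> \<nu>"
begin

lemma one_plus_prime_power_period: "[(1 + int p ^ k) ^ (p ^ (\<nu> - k)) = 1] (mod int p ^ \<nu>)"
  using one_plus_prime_power_pow_cong_1_iff k_le by simp

lemma ord_one_plus_prime_power: "ord (p ^ \<nu>) (1 + p ^ k) = p ^ (\<nu> - k)"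
proof -
  have cong_int: "[(1 + p ^ k) ^ e = 1] (mod p ^ \<nu>) \<longleftrightarrow> [(1 + int p ^ k) ^ e = 1] (mod int p ^ \<nu>)" for e
    using cong_int_iff[of "(1 + p ^ k) ^ e" 1 "p ^ \<nu>"] by simp
  have "ord (p ^ \<nu>) (1 + p ^ k) dvd p ^ (\<nu> - k)"
    unfolding ord_divides[symmetric] cong_int by (rule one_plus_prime_power_period)
  then obtain a where a: "a \<le> \<nu> - k" "ord (p ^ \<nu>) (1 + p ^ k) = p ^ a"
    using divides_primepow_nat[OF prime] by blast
  have "[(1 + p ^ k) ^ (p ^ a) = 1] (mod p ^ \<nu>)"
    unfolding ord_divides a(2) by simp
  then have "\<nu> \<le> k + a"
    unfolding cong_int one_plus_prime_power_pow_cong_1_iff .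
  with a have "a = \<nu> - k"
    by linarith
  with a show ?thesis
    by simp
qed

lemma inj_on_powers_one_plus_prime_power:
  "inj_on (\<lambda>j. (1 + int p ^ k) ^ j mod int p ^ \<nu>) {..<p ^ (\<nu> - k)}"
proof -
  have "coprime (p ^ \<nu>) (1 + p ^ k)"
    using ord_one_plus_prime_power ord_eq_0[of "p ^ \<nu>" "1 + p ^ k"] prime_gt_0_nat[OF prime] by simp
  then have "inj_on (\<lambda>j. (1 + p ^ k) ^ j mod p ^ \<nu>) {..<p ^ (\<nu> - k)}"
    using inj_power_mod ord_one_plus_prime_power by metis
  moreover have "(1 + int p ^ k) ^ j mod int p ^ \<nu> = int ((1 + p ^ k) ^ j mod p ^ \<nu>)" for j
    by (simp add: of_nat_mod)
  ultimately show ?thesis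
    by (simp add: inj_on_def)
qed

lemma Omega_eq_powers:
  "Omega p k \<nu> = (\<lambda>j. (1 + int p ^ k) ^ j mod int p ^ \<nu>) ` {..<p ^ (\<nu> - k)}"
proof (rule card_subset_eq[symmetric])
  have p2: "2 \<le> p"
    using prime prime_ge_2_nat by blast
  have "Omega p k \<nu> = {x \<in> {0..<int p ^ (\<nu> - k) * int p ^ k}. [x = 1] (mod int p ^ k)}"
    unfolding Omega_def using k_le by (simp add: power_add[symmetric])
  moreover have "1 < int p ^ k"
    using p2 k_pos by (simp add: one_less_power)
  ultimately have "card (Omega p k \<nu>) = p ^ (\<nu> - k)"
    using card_residue_class_below_multiple[of 1 "int p ^ k" "int p ^ (\<nu> - k)"] by (simp add: nat_power_eq)
  then show "card ((\<lambda>j. (1 + int p ^ k) ^ j mod int p ^ \<nu>) ` {..<p ^ (\<nu> - k)}) = card (Omega p k \<nu>)"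
    using inj_on_powers_one_plus_prime_power by (simp add: card_image)
  show "finite (Omega p k \<nu>)"
    unfolding Omega_def by (rule finite_subset[of _ "{0..<int p ^ \<nu>}"]) auto
  have "[(1 + int p ^ k) ^ j mod int p ^ \<nu> = 1] (mod int p ^ k)" for j
  proof -
    have "[(1 + int p ^ k) ^ j mod int p ^ \<nu> = (1 + int p ^ k) ^ j] (mod int p ^ k)"
      using k_le by (simp add: cong_def mod_mod_cancel le_imp_power_dvd)
    also have "[(1 + int p ^ k) ^ j = 1 ^ j] (mod int p ^ k)"
      by (intro cong_pow) (simp add: cong_def)
    finally show ?thesis
      by simp
  qed
  then show "(\<lambda>j. (1 + int p ^ k) ^ j mod int p ^ \<nu>) ` {..<p ^ (\<nu> - k)} \<subseteq> Omega p k \<nu>"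
    unfolding Omega_def using p2 by auto
qed

lemma sum_powers_one_plus_prime_power:
  obtains u where "(\<Sum>i<p ^ (\<nu> - k). (1 + int p ^ k) ^ i) = int p ^ (\<nu> - k) * u"
    and "coprime u (int p ^ k)"
proof -
  obtain w where w: "(1 + int p ^ k) ^ (p ^ (\<nu> - k)) = 1 + int p ^ (k + (\<nu> - k)) * w"
    "[w = 1] (mod int p)"
    using one_plus_prime_power_pow_prime_power[OF prime k_pos odd_or_k] by blast
  have "int p ^ k * (\<Sum>i<p ^ (\<nu> - k). (1 + int p ^ k) ^ i) = (1 + int p ^ k) ^ (p ^ (\<nu> - k)) - 1"
    by (simp add: power_diff_1_eq)
  also have "\<dots> = int p ^ k * (int p ^ (\<nu> - k) * w)"
    unfolding w(1) by (simp add: power_add)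
  finally have "(\<Sum>i<p ^ (\<nu> - k). (1 + int p ^ k) ^ i) = int p ^ (\<nu> - k) * w"
    using prime by simp
  moreover have "\<not> int p dvd w"
    using cong_dvd_iff[OF w(2)] prime by (auto simp: prime_int_iff)
  then have "coprime w (int p ^ k)"
    using prime_imp_coprime[of "int p" w] prime by (simp add: coprime_commute)
  ultimately show ?thesis
    using that by blast
qed

lemma norm_kernel_one_plus_prime_power:
  assumes "[(\<Sum>i<p ^ (\<nu> - k). (1 + int p ^ k) ^ i) * a = 0] (mod int p ^ \<nu>)"
  shows "\<exists>m. [a = (1 + int p ^ k - 1) * m] (mod int p ^ \<nu>)"
proof -
  obtain u where u: "(\<Sum>i<p ^ (\<nu> - k). (1 + int p ^ k) ^ i) = int p ^ (\<nu> - k) * u"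
    and coprime: "coprime u (int p ^ k)"
    by (rule sum_powers_one_plus_prime_power)
  have "int p ^ (\<nu> - k) * int p ^ k dvd int p ^ (\<nu> - k) * (u * a)"
    using assms k_le unfolding u by (simp add: cong_0_iff power_add[symmetric] mult.assoc)
  then have "int p ^ k dvd u * a"
    using prime by simp
  then have "int p ^ k dvd a"
    using coprime by (simp add: coprime_commute coprime_dvd_mult_right_iff)
  then obtain m where "a = int p ^ k * m"
    by (elim dvdE)
  then show ?thesis
    by (intro exI[of _ m]) simp
qed

lemma invariants_one_plus_prime_power:
  assumes "[(1 + int p ^ k) * C = C] (mod int p ^ \<nu>)"
  shows "\<exists>t. [(\<Sum>i<p ^ (\<nu> - k). (1 + int p ^ k) ^ i) * t = C] (mod int p ^ \<nu>)"
proof -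
  obtain u where u: "(\<Sum>i<p ^ (\<nu> - k). (1 + int p ^ k) ^ i) = int p ^ (\<nu> - k) * u"
    and coprime: "coprime u (int p ^ k)"
    by (rule sum_powers_one_plus_prime_power)
  have "int p ^ k * int p ^ (\<nu> - k) dvd int p ^ k * C"
    using assms k_le by (simp add: cong_iff_dvd_diff power_add[symmetric] algebra_simps)
  then have "int p ^ (\<nu> - k) dvd C"
    using prime by simp
  then obtain C' where C': "C = int p ^ (\<nu> - k) * C'"
    by (elim dvdE)
  obtain v where "[u * v = 1] (mod int p ^ k)"
    using cong_solve_coprime_int[OF coprime] by blast
  then have "[u * (v * C') = C'] (mod int p ^ k)"
    using cong_scalar_right[of "u * v" 1 "int p ^ k" C'] by (simp add: mult.assoc)
  then have "[int p ^ (\<nu> - k) * (u * (v * C')) = int p ^ (\<nu> - k) * C'] (mod int p ^ (\<nu> - k) * int p ^ k)"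
    by (rule cong_cmult_leftI)
  then show ?thesis
    using k_le unfolding u C' by (intro exI[of _ "v * C'"]) (simp add: power_add[symmetric] mult.assoc)
qed

end

end

theorem lemma2p4:
  fixes p k \<nu> :: nat
  assumes "prime p" and "1 \<le> k" and "k \<le> \<nu>"
    and "odd p \<or> (p = 2 \<and> k \<ge> 2)"
  shows "H1_vanishes (Omega p k \<nu>) (Omega_mul p \<nu>) (Omega_act p \<nu>) (int p ^ \<nu>)
       \<and> H2_vanishes (Omega p k \<nu>) (Omega_mul p \<nu>) (Omega_act p \<nu>) (int p ^ \<nu>)"
proof -
  have odd_or_k: "odd p \<or> 2 \<le> k"
    using assms(4) by auto
  interpret cyclic_mult_action "int p ^ \<nu>" "1 + int p ^ k" "p ^ (\<nu> - k)"
  proof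
    show "1 < int p ^ \<nu>"
      using assms(1-3) prime_ge_2_nat[of p] by (simp add: one_less_power)
    show "0 < p ^ (\<nu> - k)"
      using assms(1) prime_gt_0_nat by simp
  qed (use assms(1-3) odd_or_k one_plus_prime_power_period inj_on_powers_one_plus_prime_power in auto)
  have "Omega_mul p \<nu> = (\<lambda>x y. x * y mod int p ^ \<nu>)" "Omega_act p \<nu> = (\<lambda>g m. g * m mod int p ^ \<nu>)"
    by (simp_all add: fun_eq_iff Omega_mul_def Omega_act_def)
  then show ?thesis
    using assms(1-3) odd_or_k Omega_eq_powers
      H1_vanishes_if_norm_kernel_in_image[OF norm_kernel_one_plus_prime_power]
      H2_vanishes_if_invariants_in_norm_image[OF invariants_one_plus_prime_power]
    by simp
qed

end
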